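(* Let $\underline\phi\le\overline\phi$ and $\underline\chi\le\overline\chi$ be functions $[0,1]\to[0,1]$ satisfying (F1)–(F3). Then the pair $(C^{\mathrm{MM}}_{\underline\phi,\overline\chi},C^{\mathrm{MM}}_{\overline\phi,\underline\chi})$ is an imprecise copula which is coherent, i.e. with $\mathcal C=\{C: C \text{ a copula}, C^{\mathrm{MM}}_{\underline\phi,\overline\chi}\le C\le C^{\mathrm{MM}}_{\overline\phi,\underline\chi}\}$ one has $C^{\mathrm{MM}}_{\underline\phi,\overline\chi}=\inf_{C\in\mathcal C}C$ and $C^{\mathrm{MM}}_{\overline\phi,\underline\chi}=\sup_{C\in\mathcal C}C$ pointwise.
   Context: (F1) $\phi(0)=\chi(0)=0$, $\phi(1)=\chi(1)=1$; (F2) $\phi,\chi$ non-decreasing; (F3) $\phi(u)/u$ on $(0,1]$ and $\frac{1-\chi(w)}{w-\chi(w)}$ on $[0,1]$ (values in $[1,\infty]$) non-increasing. $C^{\mathrm{MM}}_{\phi,\chi}(u,w)=uw+\min\{u(1-w),(\phi(u)-u)(w-\chi(w))\}$. A copula is $C:[0,1]^2\to[0,1]$ with $C(u,0)=C(0,v)=0$, $C(u,1)=u$, $C(1,v)=v$, and $C(u_2,v_2)-C(u_1,v_2)-C(u_2,v_1)+C(u_1,v_1)\ge0$ for $u_1\le u_2$, $v_1\le v_2$. An imprecise copula is a pair $(\underline C,\overline C)$ of maps $[0,1]^2\to[0,1]$ both satisfying the boundary conditions of a copula and, for all $u_1\le u_2$, $v_1\le v_2$: $\underline C(u_2,v_2)+\overline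 C(u_1,v_1)-\underline C(u_2,v_1)-\underline C(u_1,v_2)\ge0$; $\overline C(u_2,v_2)+\underline C(u_1,v_1)-\underline C(u_2,v_1)-\underline C(u_1,v_2)\ge0$; $\overline C(u_2,v_2)+\overline C(u_1,v_1)-\overline C(u_2,v_1)-\underline C(u_1,v_2)\ge0$; $\overline C(u_2,v_2)+\overline C(u_1,v_1)-\underline C(u_2,v_1)-\overline C(u_1,v_2)\ge0$. *)

theory Defs
  imports "HOL-Analysis.Analysis"
begin

text \<open>The ratio (1 - chi w)/(w - chi w) as an extended real: value \<infinity> when the
  denominator vanishes (w < 1); at w = 1 the expression is 0/0 and we use the
  convention value 1 (the bottom of the admissible range [1,\<infinity>]).\<close>
definition chi_ratio :: "(real \<Rightarrow> real) \<Rightarrow> real \<Rightarrow> ereal" where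
  "chi_ratio ch w =
     (if w = 1 then 1
      else if w - ch w = 0 then \<infinity>
      else ereal ((1 - ch w) / (w - ch w)))"

definition F_conditions :: "(real \<Rightarrow> real) \<Rightarrow> (real \<Rightarrow> real) \<Rightarrow> bool" where
  "F_conditions \<phi> ch \<longleftrightarrow>
     (\<forall>x\<in>{0..1}. \<phi> x \<in> {0..1} \<and> ch x \<in> {0..1}) \<and>
     \<phi> 0 = 0 \<and> ch 0 = 0 \<and> \<phi> 1 = 1 \<and> ch 1 = 1 \<and>
     mono_on {0..1} \<phi> \<and> mono_on {0..1} ch \<and>
     (\<forall>u1 u2. 0 < u1 \<longrightarrow> u1 \<le> u2 \<longrightarrow> u2 \<le> 1 \<longrightarrow> \<phi> u2 / u2 \<le> \<phi> u1 / u1) \<and>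
     (\<forall>w\<in>{0..1}. 1 \<le> chi_ratio ch w) \<and>
     (\<forall>w1 w2. 0 \<le> w1 \<longrightarrow> w1 \<le> w2 \<longrightarrow> w2 \<le> 1 \<longrightarrow> chi_ratio ch w2 \<le> chi_ratio ch w1)"

definition C_MM :: "(real \<Rightarrow> real) \<Rightarrow> (real \<Rightarrow> real) \<Rightarrow> real \<Rightarrow> real \<Rightarrow> real" where
  "C_MM \<phi> ch u w = u * w + min (u * (1 - w)) ((\<phi> u - u) * (w - ch w))"

definition copula_boundary :: "(real \<Rightarrow> real \<Rightarrow> real) \<Rightarrow> bool" where
  "copula_boundary C \<longleftrightarrow>
     (\<forall>u\<in>{0..1}. \<forall>v\<in>{0..1}. C u v \<in> {0..1}) \<and>
     (\<forall>u\<in>{0..1}. C u 0 = 0 \<and> C 0 u = 0 \<and> C u 1 = u \<and> C 1 u = u)"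

definition is_copula :: "(real \<Rightarrow> real \<Rightarrow> real) \<Rightarrow> bool" where
  "is_copula C \<longleftrightarrow> copula_boundary C \<and>
     (\<forall>u1 u2 v1 v2. 0 \<le> u1 \<longrightarrow> u1 \<le> u2 \<longrightarrow> u2 \<le> 1 \<longrightarrow> 0 \<le> v1 \<longrightarrow> v1 \<le> v2 \<longrightarrow> v2 \<le> 1 \<longrightarrow>
        C u2 v2 - C u1 v2 - C u2 v1 + C u1 v1 \<ge> 0)"

definition imprecise_copula :: "(real \<Rightarrow> real \<Rightarrow> real) \<Rightarrow> (real \<Rightarrow> real \<Rightarrow> real) \<Rightarrow> bool" where
  "imprecise_copula Cl Cu \<longleftrightarrow> copula_boundary Cl \<and> copula_boundary Cu \<and>
     (\<forall>u1 u2 v1 v2. 0 \<le> u1 \<longrightarrow> u1 \<le> u2 \<longrightarrow> u2 \<le> 1 \<longrightarrow> 0 \<le> v1 \<longrightarrow> v1 \<le> v2 \<longrightarrow> v2 \<le> 1 \<longrightarrow>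
        Cl u2 v2 + Cu u1 v1 - Cl u2 v1 - Cl u1 v2 \<ge> 0 \<and>
        Cu u2 v2 + Cl u1 v1 - Cl u2 v1 - Cl u1 v2 \<ge> 0 \<and>
        Cu u2 v2 + Cu u1 v1 - Cu u2 v1 - Cl u1 v2 \<ge> 0 \<and>
        Cu u2 v2 + Cu u1 v1 - Cl u2 v1 - Cu u1 v2 \<ge> 0)"

definition copulas_between :: "(real \<Rightarrow> real \<Rightarrow> real) \<Rightarrow> (real \<Rightarrow> real \<Rightarrow> real) \<Rightarrow> (real \<Rightarrow> real \<Rightarrow> real) set" where
  "copulas_between Cl Cu = {C. is_copula C \<and>
     (\<forall>u\<in>{0..1}. \<forall>v\<in>{0..1}. Cl u v \<le> C u v \<and> C u v \<le> Cu u v)}"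

definition coherent :: "(real \<Rightarrow> real \<Rightarrow> real) \<Rightarrow> (real \<Rightarrow> real \<Rightarrow> real) \<Rightarrow> bool" where
  "coherent Cl Cu \<longleftrightarrow> copulas_between Cl Cu \<noteq> {} \<and>
     (\<forall>u\<in>{0..1}. \<forall>v\<in>{0..1}.
        Cl u v = (INF C\<in>copulas_between Cl Cu. C u v) \<and>
        Cu u v = (SUP C\<in>copulas_between Cl Cu. C u v))"

end

theory Submission
  imports Defs
begin

text \<open>Write \<open>C\<^sup>M\<^sup>M(u,w) = u - max 0 E(u,w)\<close> with the excess
  \<open>E(u,w) = u(1 - \<chi> w) - \<phi>(u)(w - \<chi> w)\<close>. The 2-increasing property becomes a rectangle
  inequality for \<open>max 0 E\<close>, which holds because \<open>max 0 E\<close> is increasing in \<open>u\<close>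
  (as \<open>\<phi>(u)/u\<close> decreases), decreasing in \<open>w\<close> (as \<open>(1 - \<chi> w)/(w - \<chi> w)\<close> decreases),
  and the mixed second difference of \<open>E\<close> is nonpositive wherever \<open>E\<close> is positive at the
  upper corner. The bounds are then ordered copulas, so each belongs to the set of copulas
  between them and is its pointwise minimum resp. maximum; coherence and the
  imprecise-copula inequalities follow.\<close>

lemma rectangle_ineq_max0:
  fixes x11 x12 x21 x22 :: real
  assumes "max 0 x11 \<le> max 0 x21" "max 0 x22 \<le> max 0 x21"
    and "0 < x22 \<Longrightarrow> x22 + x11 \<le> x21 + x12"
  shows "max 0 x22 + max 0 x11 \<le> max 0 x21 + max 0 x12"
  using assms unfolding max_def by (cases "0 < x22") (auto split: if_splits)

text \<open>In slopes, \<open>q/p \<le> B'/b' \<le> B/b\<close>; as \<open>B/b\<close> is the mediant of \<open>B'/b'\<close> and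
  \<open>(B - B')/(b - b')\<close>, it lies between them, so \<open>(B - B')/(b - b') \<ge> q/p\<close> when \<open>b' < b\<close>.\<close>
lemma slope_diff_bound:
  fixes p q B b B' b' :: real
  assumes "0 \<le> p" "0 \<le> q" "0 \<le> b'" "0 < B'" "B' \<le> B" "B' * b \<le> B * b'" "q * b' \<le> p * B'"
  shows "q * (b - b') \<le> p * (B - B')"
proof (cases "b \<le> b'")
  case True
  have "q * (b - b') \<le> 0" using True assms by (simp add: mult_nonneg_nonpos)
  moreover have "0 \<le> p * (B - B')" using assms by simp
  ultimately show ?thesis by linarith
next
  case False
  have "b' \<noteq> 0"
  proof
    assume "b' = 0"
    then have "B' * b \<le> 0" using assms by simp
    then show False using False \<open>b' = 0\<close> \<open>0 < B'\<close> by (simp add: mult_le_0_iff)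
  qed
  then have b'_pos: "0 < b'" using assms by simp
  have "b' * (q * (b - b')) = (q * b') * (b - b')" by simp
  also have "\<dots> \<le> (p * B') * (b - b')" using assms False by (intro mult_right_mono) auto
  also have "\<dots> = p * (B' * b - B' * b')" by (simp add: algebra_simps)
  also have "\<dots> \<le> p * (B * b' - B' * b')" using assms by (intro mult_left_mono) auto
  also have "\<dots> = b' * (p * (B - B'))" by (simp add: algebra_simps)
  finally show ?thesis using b'_pos by simp
qed

lemma F_conditions_range:
  assumes "F_conditions \<phi> ch" "x \<in> {0..1}"
  shows "0 \<le> \<phi> x" "\<phi> x \<le> 1" "0 \<le> ch x" "ch x \<le> 1"
  using assms unfolding F_conditions_def by auto

lemma F_conditions_mono:
  assumes "F_conditions \<phi> ch" "0 \<le> x" "x \<le> y" "y \<le> 1"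
  shows "\<phi> x \<le> \<phi> y" "ch x \<le> ch y"
  using assms unfolding F_conditions_def by (auto intro: mono_onD)

lemma phi_mult_antimono:
  assumes F: "F_conditions \<phi> ch" and "0 \<le> x" "x \<le> y" "y \<le> 1"
  shows "\<phi> y * x \<le> \<phi> x * y"
proof (cases "x = 0")
  case True then show ?thesis using F unfolding F_conditions_def by simp
next
  case False
  then have "x > 0" using assms by simp
  then have "\<phi> y / y \<le> \<phi> x / x" using F assms unfolding F_conditions_def by blast
  then show ?thesis using \<open>x > 0\<close> assms by (simp add: divide_simps mult.commute)
qed

lemma phi_ge_id:
  assumes F: "F_conditions \<phi> ch" and "0 \<le> x" "x \<le> 1"
  shows "x \<le> \<phi> x"
  using phi_mult_antimono[OF F, of x 1] assms F unfolding F_conditions_def by simp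

lemma chi_le_id:
  assumes F: "F_conditions \<phi> ch" and w: "0 \<le> w" "w \<le> 1"
  shows "ch w \<le> w"
proof (rule ccontr)
  assume "\<not> ch w \<le> w"
  then have neg: "w - ch w < 0" and "w \<noteq> 1" using F_conditions_range(4)[OF F] w by auto
  moreover have "1 \<le> chi_ratio ch w" using F w unfolding F_conditions_def by auto
  ultimately have "1 \<le> (1 - ch w) / (w - ch w)" unfolding chi_ratio_def by simp
  moreover have "(1 - ch w) / (w - ch w) \<le> 0"
    using neg F_conditions_range(4)[OF F] w by (simp add: divide_nonneg_neg)
  ultimately show False by simp
qed

lemma chi_ratio_cross_mult:
  assumes F: "F_conditions \<phi> ch" and w: "0 \<le> w1" "w1 \<le> w2" "w2 \<le> 1"
  shows "(1 - ch w2) * (w1 - ch w1) \<le> (1 - ch w1) * (w2 - ch w2)"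
proof -
  have ratio: "chi_ratio ch w2 \<le> chi_ratio ch w1" using F w unfolding F_conditions_def by blast
  have b1: "0 \<le> w1 - ch w1" and b2: "0 \<le> w2 - ch w2" using chi_le_id[OF F] w by auto
  have c1: "ch w1 \<le> 1" using F_conditions_range(4)[OF F] w by auto
  consider "w2 = 1" | "w2 - ch w2 = 0" "w2 \<noteq> 1" | "w1 - ch w1 = 0" | "0 < w1 - ch w1" "0 < w2 - ch w2" "w2 \<noteq> 1"
    using b1 b2 by linarith
  then show ?thesis
  proof cases
    case 1
    then show ?thesis using F unfolding F_conditions_def by simp
  next
    case 2
    \<comment> \<open>the ratio is \<infinity> at w2, hence also at the smaller point w1\<close>
    then have "chi_ratio ch w1 = \<infinity>" using ratio unfolding chi_ratio_def by simp
    then have "w1 - ch w1 = 0" unfolding chi_ratio_def by (auto split: if_splits)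
    then show ?thesis using 2 by simp
  next
    case 3
    then show ?thesis using c1 b2 by simp
  next
    case 4
    then have "w1 \<noteq> 1" using w by auto
    then have "(1 - ch w2) / (w2 - ch w2) \<le> (1 - ch w1) / (w1 - ch w1)"
      using ratio 4 unfolding chi_ratio_def by simp
    then show ?thesis using 4 by (simp add: divide_simps mult.commute)
  qed
qed

definition MM_excess :: "(real \<Rightarrow> real) \<Rightarrow> (real \<Rightarrow> real) \<Rightarrow> real \<Rightarrow> real \<Rightarrow> real" where
  "MM_excess \<phi> ch u w = u * (1 - ch w) - \<phi> u * (w - ch w)"

lemma C_MM_eq_diff_excess: "C_MM \<phi> ch u w = u - max 0 (MM_excess \<phi> ch u w)"
  unfolding C_MM_def MM_excess_def by (simp add: min_def max_def algebra_simps)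

lemma MM_excess_pos_mono_left:
  assumes F: "F_conditions \<phi> ch" and u: "0 \<le> u" "u \<le> u'" "u' \<le> 1" and w: "0 \<le> w" "w \<le> 1"
  shows "max 0 (MM_excess \<phi> ch u w) \<le> max 0 (MM_excess \<phi> ch u' w)"
proof (cases "0 < MM_excess \<phi> ch u w")
  case False then show ?thesis by simp
next
  case True
  have "u \<noteq> 0" using True F unfolding MM_excess_def F_conditions_def by auto
  then have u_pos: "0 < u" using u by simp
  have b: "0 \<le> w - ch w" using chi_le_id[OF F] w by simp
  have "u * MM_excess \<phi> ch u w \<le> u' * MM_excess \<phi> ch u w"
    using True u by (intro mult_right_mono) auto
  also have "\<dots> \<le> u * MM_excess \<phi> ch u' w"
    using mult_right_mono[OF phi_mult_antimono[OF F u] b]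
    unfolding MM_excess_def by (simp add: algebra_simps)
  finally have "MM_excess \<phi> ch u w \<le> MM_excess \<phi> ch u' w"
    using u_pos by simp
  then show ?thesis by simp
qed

lemma MM_excess_pos_antimono_right:
  assumes F: "F_conditions \<phi> ch" and u: "0 \<le> u" "u \<le> 1" and w: "0 \<le> w" "w \<le> w'" "w' \<le> 1"
  shows "max 0 (MM_excess \<phi> ch u w') \<le> max 0 (MM_excess \<phi> ch u w)"
proof (cases "0 < MM_excess \<phi> ch u w'")
  case False then show ?thesis by simp
next
  case True
  have f: "0 \<le> \<phi> u" using F_conditions_range[OF F, of u] u by simp
  have b': "0 \<le> w' - ch w'" using chi_le_id[OF F, of w'] w by simp
  have "\<phi> u * (w' - ch w') \<le> u * (1 - ch w')" using True unfolding MM_excess_def by simp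
  moreover have "0 \<le> \<phi> u * (w' - ch w')" using f b' by simp
  ultimately have "0 < u * (1 - ch w')" using True unfolding MM_excess_def by linarith
  then have B'_pos: "0 < 1 - ch w'" using u by (simp add: zero_less_mult_iff)
  have B'_le: "1 - ch w' \<le> 1 - ch w" using F_conditions_mono(2)[OF F w] by simp
  have "\<phi> u * (w - ch w - (w' - ch w')) \<le> u * (1 - ch w - (1 - ch w'))"
    using slope_diff_bound[OF u(1) f b' B'_pos B'_le chi_ratio_cross_mult[OF F w]]
      \<open>\<phi> u * (w' - ch w') \<le> u * (1 - ch w')\<close> by simp
  then show ?thesis unfolding MM_excess_def by (simp add: algebra_simps)
qed

lemma MM_excess_mixed_diff:
  assumes F: "F_conditions \<phi> ch" and u: "0 \<le> u" "u \<le> u'" "u' \<le> 1" and w: "0 \<le> w" "w \<le> w'" "w' \<le> 1"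
    and pos: "0 < MM_excess \<phi> ch u' w'"
  shows "MM_excess \<phi> ch u' w' + MM_excess \<phi> ch u w \<le> MM_excess \<phi> ch u' w + MM_excess \<phi> ch u w'"
proof -
  have b': "0 \<le> w' - ch w'" using chi_le_id[OF F] w by simp
  have "0 \<le> \<phi> u' * (w' - ch w')" using F_conditions_range[OF F, of u'] b' u by simp
  then have "0 < u' * (1 - ch w')" using pos unfolding MM_excess_def by linarith
  then have u'_pos: "0 < u'" and B'_pos: "0 < 1 - ch w'" using u by (auto simp: zero_less_mult_iff)
  have "u' * ((\<phi> u' - \<phi> u) * (w' - ch w')) \<le> (\<phi> u' * (w' - ch w')) * (u' - u)"
    using mult_right_mono[OF phi_mult_antimono[OF F u] b'] by (simp add: algebra_simps)
  also have "\<dots> \<le> (u' * (1 - ch w')) * (u' - u)"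
    using pos u unfolding MM_excess_def by (intro mult_right_mono) auto
  also have "\<dots> = u' * ((u' - u) * (1 - ch w'))" by simp
  finally have "(\<phi> u' - \<phi> u) * (w' - ch w') \<le> (u' - u) * (1 - ch w')"
    using u'_pos by simp
  moreover have "0 \<le> \<phi> u' - \<phi> u" using F_conditions_mono(1)[OF F u] by simp
  moreover have "1 - ch w' \<le> 1 - ch w" using F_conditions_mono(2)[OF F w] by simp
  ultimately have "(\<phi> u' - \<phi> u) * (w - ch w - (w' - ch w')) \<le> (u' - u) * (1 - ch w - (1 - ch w'))"
    using slope_diff_bound[OF _ _ b' B'_pos _ chi_ratio_cross_mult[OF F w]] u by simp
  then show ?thesis unfolding MM_excess_def by (simp add: algebra_simps)
qed

lemma copula_boundary_C_MM:
  assumes F: "F_conditions \<phi> ch"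
  shows "copula_boundary (C_MM \<phi> ch)"
  unfolding copula_boundary_def
proof (intro conjI ballI)
  fix u v :: real assume u: "u \<in> {0..1}" and v: "v \<in> {0..1}"
  have "0 \<le> (\<phi> u - u) * (v - ch v)" using phi_ge_id[OF F] chi_le_id[OF F] u v by simp
  moreover have "0 \<le> u * (1 - v)" "0 \<le> u * v" using u v by auto
  ultimately have "0 \<le> C_MM \<phi> ch u v" unfolding C_MM_def by simp
  moreover have "C_MM \<phi> ch u v \<le> u" unfolding C_MM_eq_diff_excess by simp
  ultimately show "C_MM \<phi> ch u v \<in> {0..1}" using u by simp
next
  fix u :: real assume u: "u \<in> {0..1}"
  show "C_MM \<phi> ch u 0 = 0" "C_MM \<phi> ch 0 u = 0" "C_MM \<phi> ch u 1 = u" "C_MM \<phi> ch 1 u = u"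
    using F u unfolding C_MM_def F_conditions_def by (auto simp: min_def)
qed

lemma is_copula_C_MM:
  assumes F: "F_conditions \<phi> ch"
  shows "is_copula (C_MM \<phi> ch)"
  unfolding is_copula_def
proof (intro conjI copula_boundary_C_MM[OF F] allI impI)
  fix u1 u2 v1 v2 :: real
  assume u: "0 \<le> u1" "u1 \<le> u2" "u2 \<le> 1" and v: "0 \<le> v1" "v1 \<le> v2" "v2 \<le> 1"
  have "max 0 (MM_excess \<phi> ch u2 v2) + max 0 (MM_excess \<phi> ch u1 v1)
      \<le> max 0 (MM_excess \<phi> ch u2 v1) + max 0 (MM_excess \<phi> ch u1 v2)"
  proof (rule rectangle_ineq_max0)
    show "max 0 (MM_excess \<phi> ch u1 v1) \<le> max 0 (MM_excess \<phi> ch u2 v1)"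
      using MM_excess_pos_mono_left[OF F u] v by simp
    show "max 0 (MM_excess \<phi> ch u2 v2) \<le> max 0 (MM_excess \<phi> ch u2 v1)"
      using MM_excess_pos_antimono_right[OF F _ _ v] u by simp
    show "0 < MM_excess \<phi> ch u2 v2 \<Longrightarrow>
        MM_excess \<phi> ch u2 v2 + MM_excess \<phi> ch u1 v1 \<le> MM_excess \<phi> ch u2 v1 + MM_excess \<phi> ch u1 v2"
      by (rule MM_excess_mixed_diff[OF F u v])
  qed
  then show "C_MM \<phi> ch u2 v2 - C_MM \<phi> ch u1 v2 - C_MM \<phi> ch u2 v1 + C_MM \<phi> ch u1 v1 \<ge> 0"
    unfolding C_MM_eq_diff_excess by linarith
qed

lemma C_MM_le_C_MM:
  assumes F1: "F_conditions \<phi>1 ch1" and le_phi: "\<phi>1 u \<le> \<phi>2 u" and le_chi: "ch2 v \<le> ch1 v"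
    and u: "u \<in> {0..1}" and v: "v \<in> {0..1}"
  shows "C_MM \<phi>1 ch1 u v \<le> C_MM \<phi>2 ch2 u v"
proof -
  have "u \<le> \<phi>1 u" "ch1 v \<le> v" using phi_ge_id[OF F1] chi_le_id[OF F1] u v by auto
  then have "(\<phi>1 u - u) * (v - ch1 v) \<le> (\<phi>2 u - u) * (v - ch2 v)"
    using le_phi le_chi by (intro mult_mono) auto
  then show ?thesis unfolding C_MM_def by (simp add: min_def)
qed

lemma imprecise_copula_if_ordered_copulas:
  assumes "is_copula Cl" "is_copula Cu" "\<forall>u\<in>{0..1}. \<forall>v\<in>{0..1}. Cl u v \<le> Cu u v"
  shows "imprecise_copula Cl Cu"
  unfolding imprecise_copula_def
proof (intro conjI allI impI)
  show "copula_boundary Cl" "copula_boundary Cu" using assms unfolding is_copula_def by auto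
next
  fix u1 u2 v1 v2 :: real
  assume a: "0 \<le> u1" "u1 \<le> u2" "u2 \<le> 1" "0 \<le> v1" "v1 \<le> v2" "v2 \<le> 1"
  have "Cl u2 v2 - Cl u1 v2 - Cl u2 v1 + Cl u1 v1 \<ge> 0" "Cu u2 v2 - Cu u1 v2 - Cu u2 v1 + Cu u1 v1 \<ge> 0"
    using assms(1,2) a unfolding is_copula_def by blast+
  moreover have "Cl u1 v1 \<le> Cu u1 v1" "Cl u2 v2 \<le> Cu u2 v2" "Cl u1 v2 \<le> Cu u1 v2" "Cl u2 v1 \<le> Cu u2 v1"
    using assms(3) a by auto
  ultimately show "Cl u2 v2 + Cu u1 v1 - Cl u2 v1 - Cl u1 v2 \<ge> 0"
    "Cu u2 v2 + Cl u1 v1 - Cl u2 v1 - Cl u1 v2 \<ge> 0"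
    "Cu u2 v2 + Cu u1 v1 - Cu u2 v1 - Cl u1 v2 \<ge> 0"
    "Cu u2 v2 + Cu u1 v1 - Cl u2 v1 - Cu u1 v2 \<ge> 0" by linarith+
qed

lemma coherent_if_ordered_copulas:
  assumes "is_copula Cl" "is_copula Cu" "\<forall>u\<in>{0..1}. \<forall>v\<in>{0..1}. Cl u v \<le> Cu u v"
  shows "coherent Cl Cu"
proof -
  have Cl_in: "Cl \<in> copulas_between Cl Cu" and Cu_in: "Cu \<in> copulas_between Cl Cu"
    using assms unfolding copulas_between_def by auto
  show ?thesis unfolding coherent_def
  proof (intro conjI ballI)
    show "copulas_between Cl Cu \<noteq> {}" using Cl_in by auto
  next
    fix u v :: real assume uv: "u \<in> {0..1}" "v \<in> {0..1}"
    show "Cl u v = (INF C\<in>copulas_between Cl Cu. C u v)"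
      by (rule cInf_eq_minimum[symmetric]) (use Cl_in uv in \<open>auto simp: copulas_between_def\<close>)
    show "Cu u v = (SUP C\<in>copulas_between Cl Cu. C u v)"
      by (rule cSup_eq_maximum[symmetric]) (use Cu_in uv in \<open>auto simp: copulas_between_def\<close>)
  qed
qed

theorem corollary3:
  fixes \<phi>l \<phi>u chl chu :: "real \<Rightarrow> real"
  assumes "F_conditions \<phi>l chl" and "F_conditions \<phi>l chu"
      and "F_conditions \<phi>u chl" and "F_conditions \<phi>u chu"
      and "\<forall>x\<in>{0..1}. \<phi>l x \<le> \<phi>u x"
      and "\<forall>x\<in>{0..1}. chl x \<le> chu x"
  shows "imprecise_copula (C_MM \<phi>l chu) (C_MM \<phi>u chl) \<and>
         coherent (C_MM \<phi>l chu) (C_MM \<phi>u chl)"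
proof -
  have lower: "is_copula (C_MM \<phi>l chu)" by (rule is_copula_C_MM[OF assms(2)])
  have upper: "is_copula (C_MM \<phi>u chl)" by (rule is_copula_C_MM[OF assms(3)])
  have ordered: "\<forall>u\<in>{0..1}. \<forall>v\<in>{0..1}. C_MM \<phi>l chu u v \<le> C_MM \<phi>u chl u v"
    using C_MM_le_C_MM[OF assms(2)] assms(5,6) by blast
  show ?thesis
    using imprecise_copula_if_ordered_copulas[OF lower upper ordered]
      coherent_if_ordered_copulas[OF lower upper ordered] by blast
qed

end
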